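(* In the stratified setting below, define for each stratum $l$ the quantities $U_l^+,V_l^+,\eta_l^+,\nu_l^+$ and let $TE^+=\sum_{l=1}^L(U_l^+-\eta_l^+)$. If $TE^+\ge 1$, set for each $l$: $A_l=\min(U_l^+,\eta_l^+)$, $D_l=\min(\nu_l^+,V_l^+)$, $B_l=\min(U_l^+-A_l,\nu_l^+-D_l)$, $C_l=\min(\eta_l^+-A_l,V_l^+-D_l)$. If $TE^+<1$, set for each $l$: $B_l=\min(U_l^+,\nu_l^+)$, $C_l=\min(\eta_l^+,V_l^+)$. Then the maximum $\chi^+$ of $\chi(\mathbf a)$ over all feasible matchings equals $$\chi^+=\frac{\sum_{l=1}^L (B_l-C_l)-1}{\sqrt{\sum_{l=1}^L(B_l+C_l)+1}},$$ and it is attained by a feasible matching realizing these pair counts in each stratum.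
   Context: Stratified setting: there are $L$ strata. In stratum $l$ there are $N_l^t$ treated and $N_l^c$ control units, each with a binary outcome; $U_l$ is the number of treated units with outcome 1, $V_l=N_l^t-U_l$ the number of treated units with outcome 0, $\eta_l$ the number of control units with outcome 1, $\nu_l=N_l^c-\eta_l$ the number of control units with outcome 0. Let $M_l=\min(N_l^t,N_l^c)$. A feasible matching $\mathbf a$ is a set of disjoint treated–control pairs, each pair lying within a single stratum, each unit in at most one pair, with exactly $M_l$ pairs in stratum $l$ for every $l$. For a matching, $B(\mathbf a)$ is the number of pairs whose treated unit has outcome 1 and control unit has outcome 0, $C(\mathbf a)$ the number of pairs whose treated unit has outcome 0 and control unit has outcome 1, and $\chi(\mathbf a)=\frac{B(\mathbf a)-C(\mathbf a)-1}{\sqrt{B(\mathbf a)+C(\mathbf a)+1}}$. Truncated counts: $G_l^-=\max(N_l^t-N_l^c,0)$, $G_l^+=\max(N_l^c-N_l^t,0)$, $U_l^+=U_l-\max(U_l-N_l^c,0)$, $V_l^+=M_l-U_l^+$, $\eta_l^+=\max(\eta_l-G_l^+,0)$, $\nu_l^+=M_l-\eta_l^+$. *)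

theory Defs
  imports Complex_Main
begin

(* Setting: strata l < L (0-indexed). Stratum l has treated units i < Nt l with binary
   outcome yt l i, and control units j < Nc l with binary outcome yc l j.
   A matching is a set of triples (l,i,j): treated unit i of stratum l paired with
   control unit j of stratum l. *)

definition M :: "(nat \<Rightarrow> nat) \<Rightarrow> (nat \<Rightarrow> nat) \<Rightarrow> nat \<Rightarrow> nat" where
  "M Nt Nc l = min (Nt l) (Nc l)"

definition feasible_matching ::
  "nat \<Rightarrow> (nat \<Rightarrow> nat) \<Rightarrow> (nat \<Rightarrow> nat) \<Rightarrow> (nat \<times> nat \<times> nat) set \<Rightarrow> bool" where
  "feasible_matching L Nt Nc a \<longleftrightarrow>
     a \<subseteq> {(l,i,j). l < L \<and> i < Nt l \<and> j < Nc l} \<and>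
     (\<forall>l i j j'. (l,i,j) \<in> a \<longrightarrow> (l,i,j') \<in> a \<longrightarrow> j = j') \<and>
     (\<forall>l i i' j. (l,i,j) \<in> a \<longrightarrow> (l,i',j) \<in> a \<longrightarrow> i = i') \<and>
     (\<forall>l<L. card {(i,j). (l,i,j) \<in> a} = M Nt Nc l)"

definition Bcount :: "(nat \<Rightarrow> nat \<Rightarrow> bool) \<Rightarrow> (nat \<Rightarrow> nat \<Rightarrow> bool) \<Rightarrow> (nat \<times> nat \<times> nat) set \<Rightarrow> nat" where
  "Bcount yt yc a = card {(l,i,j) \<in> a. yt l i \<and> \<not> yc l j}"

definition Ccount :: "(nat \<Rightarrow> nat \<Rightarrow> bool) \<Rightarrow> (nat \<Rightarrow> nat \<Rightarrow> bool) \<Rightarrow> (nat \<times> nat \<times> nat) set \<Rightarrow> nat" where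
  "Ccount yt yc a = card {(l,i,j) \<in> a. \<not> yt l i \<and> yc l j}"

definition Bcount_l :: "(nat \<Rightarrow> nat \<Rightarrow> bool) \<Rightarrow> (nat \<Rightarrow> nat \<Rightarrow> bool) \<Rightarrow> (nat \<times> nat \<times> nat) set \<Rightarrow> nat \<Rightarrow> nat" where
  "Bcount_l yt yc a l = card {(i,j). (l,i,j) \<in> a \<and> yt l i \<and> \<not> yc l j}"

definition Ccount_l :: "(nat \<Rightarrow> nat \<Rightarrow> bool) \<Rightarrow> (nat \<Rightarrow> nat \<Rightarrow> bool) \<Rightarrow> (nat \<times> nat \<times> nat) set \<Rightarrow> nat \<Rightarrow> nat" where
  "Ccount_l yt yc a l = card {(i,j). (l,i,j) \<in> a \<and> \<not> yt l i \<and> yc l j}"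

definition chi :: "(nat \<Rightarrow> nat \<Rightarrow> bool) \<Rightarrow> (nat \<Rightarrow> nat \<Rightarrow> bool) \<Rightarrow> (nat \<times> nat \<times> nat) set \<Rightarrow> real" where
  "chi yt yc a = (real (Bcount yt yc a) - real (Ccount yt yc a) - 1)
                 / sqrt (real (Bcount yt yc a) + real (Ccount yt yc a) + 1)"

definition U :: "(nat \<Rightarrow> nat) \<Rightarrow> (nat \<Rightarrow> nat \<Rightarrow> bool) \<Rightarrow> nat \<Rightarrow> int" where
  "U Nt yt l = int (card {i. i < Nt l \<and> yt l i})"
definition V :: "(nat \<Rightarrow> nat) \<Rightarrow> (nat \<Rightarrow> nat \<Rightarrow> bool) \<Rightarrow> nat \<Rightarrow> int" where
  "V Nt yt l = int (Nt l) - U Nt yt l"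
definition eta :: "(nat \<Rightarrow> nat) \<Rightarrow> (nat \<Rightarrow> nat \<Rightarrow> bool) \<Rightarrow> nat \<Rightarrow> int" where
  "eta Nc yc l = int (card {j. j < Nc l \<and> yc l j})"
definition nu :: "(nat \<Rightarrow> nat) \<Rightarrow> (nat \<Rightarrow> nat \<Rightarrow> bool) \<Rightarrow> nat \<Rightarrow> int" where
  "nu Nc yc l = int (Nc l) - eta Nc yc l"

definition Gminus :: "(nat \<Rightarrow> nat) \<Rightarrow> (nat \<Rightarrow> nat) \<Rightarrow> nat \<Rightarrow> int" where
  "Gminus Nt Nc l = max (int (Nt l) - int (Nc l)) 0"
definition Gplus :: "(nat \<Rightarrow> nat) \<Rightarrow> (nat \<Rightarrow> nat) \<Rightarrow> nat \<Rightarrow> int" where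
  "Gplus Nt Nc l = max (int (Nc l) - int (Nt l)) 0"
definition Uplus :: "(nat \<Rightarrow> nat) \<Rightarrow> (nat \<Rightarrow> nat) \<Rightarrow> (nat \<Rightarrow> nat \<Rightarrow> bool) \<Rightarrow> nat \<Rightarrow> int" where
  "Uplus Nt Nc yt l = U Nt yt l - max (U Nt yt l - int (Nc l)) 0"
definition Vplus :: "(nat \<Rightarrow> nat) \<Rightarrow> (nat \<Rightarrow> nat) \<Rightarrow> (nat \<Rightarrow> nat \<Rightarrow> bool) \<Rightarrow> nat \<Rightarrow> int" where
  "Vplus Nt Nc yt l = int (M Nt Nc l) - Uplus Nt Nc yt l"
definition etaplus :: "(nat \<Rightarrow> nat) \<Rightarrow> (nat \<Rightarrow> nat) \<Rightarrow> (nat \<Rightarrow> nat \<Rightarrow> bool) \<Rightarrow> nat \<Rightarrow> int" where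
  "etaplus Nt Nc yc l = max (eta Nc yc l - Gplus Nt Nc l) 0"
definition nuplus :: "(nat \<Rightarrow> nat) \<Rightarrow> (nat \<Rightarrow> nat) \<Rightarrow> (nat \<Rightarrow> nat \<Rightarrow> bool) \<Rightarrow> nat \<Rightarrow> int" where
  "nuplus Nt Nc yc l = int (M Nt Nc l) - etaplus Nt Nc yc l"

end

theory Submission
  imports Defs
begin

(*
  A stratum-l matching has M_l pairs, so it uses at most U_l^+ = min(U_l, M_l)
  treated units with outcome 1 and at least eta_l^+ = max(eta_l - (N_l^c - M_l), 0) control
  units with outcome 1; hence its counts satisfy b_l - c_l <= D_l := U_l^+ - eta_l^+ and
  b_l <= min(U_l^+, nu_l^+).  With k = sum_l (D_l - (b_l - c_l)) >= 0 the statistic equals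
  (TE^+ - k - 1)/sqrt(s + 1), s = sum_l (b_l + c_l).  If TE^+ >= 1 the candidate has
  B_l + C_l = |D_l|, so s >= S - k, and losing k in the numerator costs more than the
  smaller denominator gains.  If TE^+ < 1 the numerator is negative and b_l <= B_l gives
  s <= S + k, so a matching can only do worse.  The candidate counts are realised stratum by
  stratum by gluing four bijections between blocks of units with prescribed outcomes.
*)

definition chi_ratio :: "real \<Rightarrow> real \<Rightarrow> real" where
  "chi_ratio d t = (d - 1) / sqrt (t + 1)"

lemma chi_ratio_le_of_ge_one:
  fixes T S k s :: real
  assumes "1 \<le> T" "T \<le> S" "0 \<le> k" "S - k \<le> s" "0 \<le> s"
  shows "chi_ratio (T - k) s \<le> chi_ratio T S"
proof (cases "T - k \<le> 1")
  case True
  then have "chi_ratio (T - k) s \<le> 0"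
    using assms by (auto simp: chi_ratio_def intro: divide_nonpos_nonneg)
  also have "0 \<le> chi_ratio T S"
    using assms by (simp add: chi_ratio_def)
  finally show ?thesis .
next
  case False
  define n where "n = T - 1"
  have n: "k < n" "n + 1 \<le> S" using False assms by (auto simp: n_def)
  have key: "(n - k)\<^sup>2 * (S + 1) \<le> n\<^sup>2 * (S - k + 1)"
  proof -
    have "k * (S + 1) + n\<^sup>2 \<le> 2 * n * (S + 1)"
      using n assms mult_right_mono[of k n "S + 1"] mult_left_mono[of n "S + 1" n]
      by (simp add: power2_eq_square algebra_simps)
    then have "k * (k * (S + 1) + n\<^sup>2) \<le> k * (2 * n * (S + 1))"
      using assms by (intro mult_left_mono) auto
    then show ?thesis by (simp add: power2_eq_square algebra_simps)
  qed
  have "(n - k) * sqrt (S + 1) = sqrt ((n - k)\<^sup>2 * (S + 1))"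
    using n by (simp add: real_sqrt_mult)
  also have "\<dots> \<le> sqrt (n\<^sup>2 * (S - k + 1))"
    using key by simp
  also have "\<dots> = n * sqrt (S - k + 1)"
    using n assms by (simp add: real_sqrt_mult)
  finally have "chi_ratio (T - k) (S - k) \<le> chi_ratio T S"
    using n assms by (simp add: chi_ratio_def n_def divide_simps algebra_simps)
  moreover have "chi_ratio (T - k) s \<le> chi_ratio (T - k) (S - k)"
    unfolding chi_ratio_def using False assms by (intro divide_left_mono) auto
  ultimately show ?thesis by linarith
qed

lemma chi_ratio_le_of_less_one:
  fixes T S k s :: real
  assumes "T < 1" "- T \<le> S" "0 \<le> k" "s \<le> S + k" "0 \<le> s"
  shows "chi_ratio (T - k) s \<le> chi_ratio T S"
proof -
  define m where "m = 1 - T"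
  have m: "0 < m" "m \<le> S + 1" using assms by (auto simp: m_def)
  have key: "m\<^sup>2 * (S + k + 1) \<le> (m + k)\<^sup>2 * (S + 1)"
  proof -
    have "k * m * m \<le> k * (2 * (S + 1)) * m"
      using m assms by (intro mult_right_mono mult_left_mono) auto
    moreover have "0 \<le> k * k * (S + 1)" using m assms by simp
    ultimately show ?thesis by (simp add: power2_eq_square algebra_simps)
  qed
  have "m * sqrt (S + k + 1) = sqrt (m\<^sup>2 * (S + k + 1))"
    using m by (simp add: real_sqrt_mult)
  also have "\<dots> \<le> sqrt ((m + k)\<^sup>2 * (S + 1))"
    using key by simp
  also have "\<dots> = (m + k) * sqrt (S + 1)"
    using m assms by (simp add: real_sqrt_mult)
  finally have "chi_ratio (T - k) (S + k) \<le> chi_ratio T S"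
    using m assms by (simp add: chi_ratio_def m_def divide_simps algebra_simps)
  moreover have "chi_ratio (T - k) s \<le> chi_ratio (T - k) (S + k)"
    unfolding chi_ratio_def using m assms by (intro divide_left_mono_neg) (auto simp: m_def)
  ultimately show ?thesis by linarith
qed

lemma chi_ratio_sum_le:
  fixes D B C b c :: "nat \<Rightarrow> int"
  assumes diff: "\<And>l. l < L \<Longrightarrow> B l - C l = D l"
    and nonneg: "\<And>l. l < L \<Longrightarrow> 0 \<le> B l \<and> 0 \<le> b l \<and> 0 \<le> c l"
    and dominated: "\<And>l. l < L \<Longrightarrow> b l - c l \<le> D l"
    and pos: "\<And>l. 1 \<le> (\<Sum>l<L. D l) \<Longrightarrow> l < L \<Longrightarrow> B l + C l = \<bar>D l\<bar>"
    and nonpos: "\<And>l. (\<Sum>l<L. D l) < 1 \<Longrightarrow> l < L \<Longrightarrow> b l \<le> B l"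
  shows "chi_ratio (real_of_int (\<Sum>l<L. b l - c l)) (real_of_int (\<Sum>l<L. b l + c l))
           \<le> chi_ratio (real_of_int (\<Sum>l<L. B l - C l)) (real_of_int (\<Sum>l<L. B l + C l))"
proof -
  define T where "T = (\<Sum>l<L. D l)"
  define S where "S = (\<Sum>l<L. B l + C l)"
  define k where "k = (\<Sum>l<L. D l - (b l - c l))"
  define s where "s = (\<Sum>l<L. b l + c l)"
  have sum_BC: "(\<Sum>l<L. B l - C l) = T" unfolding T_def using diff by simp
  have sum_bc: "(\<Sum>l<L. b l - c l) = T - k" unfolding T_def k_def by (simp add: sum_subtractf)
  have k_nonneg: "0 \<le> k" unfolding k_def using dominated by (intro sum_nonneg) auto
  have s_nonneg: "0 \<le> s" unfolding s_def using nonneg by (intro sum_nonneg) auto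
  have "chi_ratio (of_int T - of_int k) (of_int s) \<le> chi_ratio (of_int T) (of_int S)"
  proof (cases "1 \<le> T")
    case True
    have "T \<le> S" unfolding T_def S_def using pos True by (intro sum_mono) (auto simp: T_def)
    moreover have "S - k \<le> s"
    proof -
      have "S - k = (\<Sum>l<L. (B l + C l) - (D l - (b l - c l)))"
        unfolding S_def k_def by (simp add: sum_subtractf)
      also have "\<dots> \<le> s"
        unfolding s_def using pos[OF True[unfolded T_def]] nonneg dominated
        by (intro sum_mono) fastforce
      finally show ?thesis .
    qed
    ultimately show ?thesis
      using True k_nonneg s_nonneg by (intro chi_ratio_le_of_ge_one) simp_all
  next
    case False
    have "- T \<le> S" unfolding sum_BC[symmetric] S_def sum_negf[symmetric]
      using nonneg by (intro sum_mono) auto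
    moreover have "s \<le> S + k"
    proof -
      have "s \<le> (\<Sum>l<L. (B l + C l) + (D l - (b l - c l)))"
        unfolding s_def using nonpos[OF False[unfolded T_def not_le]] diff by (intro sum_mono) fastforce
      also have "\<dots> = S + k" unfolding S_def k_def by (simp add: sum.distrib)
      finally show ?thesis .
    qed
    ultimately show ?thesis
      using False k_nonneg s_nonneg by (intro chi_ratio_le_of_less_one) simp_all
  qed
  then show ?thesis
    unfolding sum_BC sum_bc S_def[symmetric] s_def[symmetric] of_int_diff .
qed

definition matching :: "('a \<times> 'b) set \<Rightarrow> bool" where
  "matching P \<longleftrightarrow>
     (\<forall>i j j'. (i, j) \<in> P \<longrightarrow> (i, j') \<in> P \<longrightarrow> j = j') \<and>
     (\<forall>i i' j. (i, j) \<in> P \<longrightarrow> (i', j) \<in> P \<longrightarrow> i = i')"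

lemma finite_filter_pairs: "finite P \<Longrightarrow> finite {(i, j) \<in> P. Q i j}"
  by (rule finite_subset[of _ P]) auto

lemma card_pairs_split:
  assumes "finite P"
  shows "card {(i, j) \<in> P. Q i j \<and> R i j} + card {(i, j) \<in> P. Q i j \<and> \<not> R i j}
       = card {(i, j) \<in> P. Q i j}"
proof -
  have "card {(i, j) \<in> P. Q i j \<and> R i j} + card {(i, j) \<in> P. Q i j \<and> \<not> R i j}
      = card ({(i, j) \<in> P. Q i j \<and> R i j} \<union> {(i, j) \<in> P. Q i j \<and> \<not> R i j})"
    using assms by (intro card_Un_disjoint[symmetric] finite_filter_pairs) auto
  also have "{(i, j) \<in> P. Q i j \<and> R i j} \<union> {(i, j) \<in> P. Q i j \<and> \<not> R i j} = {(i, j) \<in> P. Q i j}"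
    by auto
  finally show ?thesis .
qed

lemma card_filter_lessThan_le: "card {i. i < n \<and> f i} \<le> n"
  using card_mono[of "{..<n}" "{i. i < n \<and> f i}"] by auto

lemma card_filter_lessThan_compl: "card {i. i < n \<and> \<not> f i} = n - card {i. i < n \<and> f i}"
proof -
  have "card {i. i < n \<and> \<not> f i} + card {i. i < n \<and> f i} = card ({i. i < n \<and> \<not> f i} \<union> {i. i < n \<and> f i})"
    by (intro card_Un_disjoint[symmetric]) auto
  also have "{i. i < n \<and> \<not> f i} \<union> {i. i < n \<and> f i} = {..<n}"
    by auto
  finally show ?thesis by simp
qed

lemma card_matching_rows_le:
  fixes P :: "(nat \<times> 'b) set"
  assumes "matching P" "P \<subseteq> {..<n} \<times> UNIV"
  shows "card {(i, j) \<in> P. f i} \<le> card {i. i < n \<and> f i}"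
proof (rule card_inj_on_le[where f = fst])
  show "inj_on fst {(i, j) \<in> P. f i}"
    using assms(1) by (auto simp: matching_def inj_on_def)
  show "fst ` {(i, j) \<in> P. f i} \<subseteq> {i. i < n \<and> f i}"
    using assms(2) by auto
qed (rule finite_subset[of _ "{..<n}"], auto)

lemma card_matching_cols_le:
  fixes P :: "('a \<times> nat) set"
  assumes "matching P" "P \<subseteq> UNIV \<times> {..<m}"
  shows "card {(i, j) \<in> P. g j} \<le> card {j. j < m \<and> g j}"
proof (rule card_inj_on_le[where f = snd])
  show "inj_on snd {(i, j) \<in> P. g j}"
    using assms(1) by (auto simp: matching_def inj_on_def)
  show "snd ` {(i, j) \<in> P. g j} \<subseteq> {j. j < m \<and> g j}"
    using assms(2) by auto
qed (rule finite_subset[of _ "{..<m}"], auto)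

lemma matching_cross_count_bounds:
  fixes P :: "(nat \<times> nat) set" and f g :: "nat \<Rightarrow> bool"
  assumes P: "P \<subseteq> {..<n} \<times> {..<m}" "matching P" "card P = min n m"
  defines "b \<equiv> card {(i, j) \<in> P. f i \<and> \<not> g j}"
    and "c \<equiv> card {(i, j) \<in> P. \<not> f i \<and> g j}"
    and "p \<equiv> int (card {i. i < n \<and> f i})"
    and "q \<equiv> int (card {j. j < m \<and> g j})"
    and "k \<equiv> int (min n m)"
  shows "int b - int c \<le> min p k - max (q - (int m - k)) 0"
    and "int b \<le> min (min p k) (k - max (q - (int m - k)) 0)"
proof -
  have fin: "finite P"
    using P(1) by (rule finite_subset) simp
  define rows where "rows = card {(i, j) \<in> P. f i}"
  define cols where "cols = card {(i, j) \<in> P. g j}"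
  define cols0 where "cols0 = card {(i, j) \<in> P. \<not> g j}"
  define both where "both = card {(i, j) \<in> P. f i \<and> g j}"
  have "b + both = rows"
    using card_pairs_split[OF fin, of "\<lambda>i j. f i" "\<lambda>i j. \<not> g j"] by (simp add: b_def both_def rows_def)
  moreover have "c + both = cols"
    using card_pairs_split[OF fin, of "\<lambda>i j. g j" "\<lambda>i j. \<not> f i"]
    by (simp add: c_def both_def cols_def conj_commute)
  moreover have "cols + cols0 = card P"
    using card_pairs_split[OF fin, of "\<lambda>i j. True" "\<lambda>i j. g j"] by (simp add: cols_def cols0_def)
  moreover have "rows \<le> card {i. i < n \<and> f i}"
    unfolding rows_def using P by (intro card_matching_rows_le) auto
  moreover have "rows \<le> card P"
    unfolding rows_def using fin by (intro card_mono) auto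
  moreover have "cols0 + card {j. j < m \<and> g j} \<le> m"
  proof -
    have "cols0 \<le> card {j. j < m \<and> \<not> g j}"
      unfolding cols0_def using P by (intro card_matching_cols_le) auto
    then show ?thesis
      using card_filter_lessThan_compl[of m g] card_filter_lessThan_le[of m g] by linarith
  qed
  moreover have "b \<le> cols0"
    unfolding b_def cols0_def using fin by (intro card_mono finite_filter_pairs) auto
  ultimately show "int b - int c \<le> min p k - max (q - (int m - k)) 0"
    and "int b \<le> min (min p k) (k - max (q - (int m - k)) 0)"
    using P(3) unfolding p_def q_def k_def by linarith+
qed

lemma obtain_disjoint_subsets:
  assumes "finite X" "A + B \<le> card X"
  obtains X' X'' where "X' \<subseteq> X" "X'' \<subseteq> X" "X' \<inter> X'' = {}" "card X' = A" "card X'' = B"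
proof -
  obtain X' where X': "X' \<subseteq> X" "card X' = A"
    using obtain_subset_with_card_n[of A X] assms by auto
  have "B \<le> card (X - X')"
    using assms X' by (simp add: card_Diff_subset finite_subset)
  then obtain X'' where "X'' \<subseteq> X - X'" "card X'' = B"
    using obtain_subset_with_card_n by metis
  with X' show ?thesis using that by blast
qed

lemma obtain_matching_between:
  assumes "finite X" "finite Y" "card X = k" "card Y = k"
  obtains P where "P \<subseteq> X \<times> Y" "matching P" "card P = k"
proof -
  obtain f where f: "bij_betw f X Y"
    using finite_same_card_bij assms by metis
  let ?P = "(\<lambda>i. (i, f i)) ` X"
  have "?P \<subseteq> X \<times> Y" "card ?P = k"
    using f assms by (auto simp: bij_betw_def card_image inj_on_def)
  moreover have "matching ?P"
    using f by (auto simp: matching_def bij_betw_def inj_on_def)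
  ultimately show ?thesis using that by blast
qed

lemma matching_Un:
  assumes "matching P" "matching Q" "P \<subseteq> X \<times> Y" "Q \<subseteq> X' \<times> Y'"
    and "X \<inter> X' = {}" "Y \<inter> Y' = {}"
  shows "matching (P \<union> Q)"
  unfolding matching_def
proof (intro conjI allI impI)
  fix i j j' assume "(i, j) \<in> P \<union> Q" "(i, j') \<in> P \<union> Q"
  then show "j = j'"
    using assms unfolding matching_def by auto
next
  fix i i' j assume "(i, j) \<in> P \<union> Q" "(i', j) \<in> P \<union> Q"
  then show "i = i'"
    using assms unfolding matching_def by auto
qed

lemma obtain_matching_with_cross_counts:
  assumes fin: "finite X1" "finite X0" "finite Y1" "finite Y0"
    and disj: "X1 \<inter> X0 = {}" "Y1 \<inter> Y0 = {}"
    and cards: "A + B \<le> card X1" "C + D \<le> card X0" "A + C \<le> card Y1" "B + D \<le> card Y0"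
  obtains P where "P \<subseteq> (X1 \<union> X0) \<times> (Y1 \<union> Y0)" "matching P" "card P = A + B + C + D"
    "card (P \<inter> X1 \<times> Y0) = B" "card (P \<inter> X0 \<times> Y1) = C"
proof -
  obtain Xa Xb where X1: "Xa \<subseteq> X1" "Xb \<subseteq> X1" "Xa \<inter> Xb = {}" "card Xa = A" "card Xb = B"
    using obtain_disjoint_subsets[OF fin(1) cards(1)] .
  obtain Xc Xd where X0: "Xc \<subseteq> X0" "Xd \<subseteq> X0" "Xc \<inter> Xd = {}" "card Xc = C" "card Xd = D"
    using obtain_disjoint_subsets[OF fin(2) cards(2)] .
  obtain Ya Yc where Y1: "Ya \<subseteq> Y1" "Yc \<subseteq> Y1" "Ya \<inter> Yc = {}" "card Ya = A" "card Yc = C"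
    using obtain_disjoint_subsets[OF fin(3) cards(3)] .
  obtain Yb Yd where Y0: "Yb \<subseteq> Y0" "Yd \<subseteq> Y0" "Yb \<inter> Yd = {}" "card Yb = B" "card Yd = D"
    using obtain_disjoint_subsets[OF fin(4) cards(4)] .
  note finite = finite_subset[OF X1(1) fin(1)] finite_subset[OF X1(2) fin(1)]
    finite_subset[OF X0(1) fin(2)] finite_subset[OF X0(2) fin(2)]
    finite_subset[OF Y1(1) fin(3)] finite_subset[OF Y1(2) fin(3)]
    finite_subset[OF Y0(1) fin(4)] finite_subset[OF Y0(2) fin(4)]
  obtain Pa where Pa: "Pa \<subseteq> Xa \<times> Ya" "matching Pa" "card Pa = A"
    using obtain_matching_between[OF finite(1) finite(5) X1(4) Y1(4)] .
  obtain Pb where Pb: "Pb \<subseteq> Xb \<times> Yb" "matching Pb" "card Pb = B"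
    using obtain_matching_between[OF finite(2) finite(7) X1(5) Y0(4)] .
  obtain Pc where Pc: "Pc \<subseteq> Xc \<times> Yc" "matching Pc" "card Pc = C"
    using obtain_matching_between[OF finite(3) finite(6) X0(4) Y1(5)] .
  obtain Pd where Pd: "Pd \<subseteq> Xd \<times> Yd" "matching Pd" "card Pd = D"
    using obtain_matching_between[OF finite(4) finite(8) X0(5) Y0(5)] .
  have fP: "finite Pa" "finite Pb" "finite Pc" "finite Pd"
    using finite_subset[OF Pa(1)] finite_subset[OF Pb(1)] finite_subset[OF Pc(1)]
      finite_subset[OF Pd(1)] finite by auto
  have rows: "Xa \<inter> Xb = {}" "(Xa \<union> Xb) \<inter> Xc = {}" "(Xa \<union> Xb \<union> Xc) \<inter> Xd = {}"
    using X1 X0 disj(1) by blast+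
  have cols: "Ya \<inter> Yb = {}" "(Ya \<union> Yb) \<inter> Yc = {}" "(Ya \<union> Yb \<union> Yc) \<inter> Yd = {}"
    using Y1 Y0 disj(2) by blast+
  have boxes: "Pa \<union> Pb \<subseteq> (Xa \<union> Xb) \<times> (Ya \<union> Yb)"
    "Pa \<union> Pb \<union> Pc \<subseteq> (Xa \<union> Xb \<union> Xc) \<times> (Ya \<union> Yb \<union> Yc)"
    using Pa(1) Pb(1) Pc(1) by blast+
  let ?P = "Pa \<union> Pb \<union> Pc \<union> Pd"
  have sub: "?P \<subseteq> (X1 \<union> X0) \<times> (Y1 \<union> Y0)"
    using boxes(2) Pd(1) X1 X0 Y1 Y0 by blast
  have match: "matching ?P"
    using matching_Un[OF matching_Un[OF matching_Un[OF Pa(2) Pb(2) Pa(1) Pb(1) rows(1) cols(1)]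
          Pc(2) boxes(1) Pc(1) rows(2) cols(2)] Pd(2) boxes(2) Pd(1) rows(3) cols(3)] .
  have card: "card ?P = A + B + C + D"
  proof -
    have "Pa \<inter> Pb = {}" "(Pa \<union> Pb) \<inter> Pc = {}" "(Pa \<union> Pb \<union> Pc) \<inter> Pd = {}"
      using boxes Pa(1) Pb(1) Pc(1) Pd(1) rows by blast+
    then show ?thesis
      using fP Pa(3) Pb(3) Pc(3) Pd(3) by (simp add: card_Un_disjoint)
  qed
  have cross: "?P \<inter> X1 \<times> Y0 = Pb" "?P \<inter> X0 \<times> Y1 = Pc"
    using Pa(1) Pb(1) Pc(1) Pd(1) X1(1,2) X0(1,2) Y1(1,2) Y0(1,2) disj by blast+
  show ?thesis
    using that[OF sub match card] cross Pb(3) Pc(3) by simp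
qed

definition stratum :: "(nat \<times> nat \<times> nat) set \<Rightarrow> nat \<Rightarrow> (nat \<times> nat) set" where
  "stratum a l = {(i, j). (l, i, j) \<in> a}"

lemma feasible_matching_iff:
  "feasible_matching L Nt Nc a \<longleftrightarrow>
     a \<subseteq> {(l, i, j). l < L \<and> i < Nt l \<and> j < Nc l} \<and>
     (\<forall>l. matching (stratum a l)) \<and> (\<forall>l<L. card (stratum a l) = M Nt Nc l)"
  unfolding feasible_matching_def matching_def stratum_def by auto

lemma stratum_subset:
  "a \<subseteq> {(l, i, j). l < L \<and> i < Nt l \<and> j < Nc l} \<Longrightarrow> stratum a l \<subseteq> {..<Nt l} \<times> {..<Nc l}"
  unfolding stratum_def by auto

lemma Bcount_l_stratum: "Bcount_l yt yc a l = card {(i, j) \<in> stratum a l. yt l i \<and> \<not> yc l j}"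
  unfolding Bcount_l_def stratum_def by simp

lemma Ccount_l_stratum: "Ccount_l yt yc a l = card {(i, j) \<in> stratum a l. \<not> yt l i \<and> yc l j}"
  unfolding Ccount_l_def stratum_def by simp

lemma U_bounds: "0 \<le> U Nt yt l" "U Nt yt l \<le> int (Nt l)"
  using card_filter_lessThan_le[of "Nt l" "yt l"] by (simp_all add: U_def)

lemma eta_bounds: "0 \<le> eta Nc yc l" "eta Nc yc l \<le> int (Nc l)"
  using card_filter_lessThan_le[of "Nc l" "yc l"] by (simp_all add: eta_def)

lemma Uplus_eq_min: "Uplus Nt Nc yt l = min (U Nt yt l) (int (M Nt Nc l))"
  using U_bounds[of Nt yt l] by (simp add: Uplus_def M_def)

lemma etaplus_eq_max: "etaplus Nt Nc yc l = max (eta Nc yc l - (int (Nc l) - int (M Nt Nc l))) 0"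
  by (simp add: etaplus_def Gplus_def M_def max_def min_def)

lemma Uplus_Vplus_bounds:
  shows "0 \<le> Uplus Nt Nc yt l" "Uplus Nt Nc yt l \<le> U Nt yt l"
    and "0 \<le> Vplus Nt Nc yt l" "Vplus Nt Nc yt l \<le> V Nt yt l"
    and "Uplus Nt Nc yt l + Vplus Nt Nc yt l = int (M Nt Nc l)"
  using U_bounds[of Nt yt l] unfolding Uplus_eq_min Vplus_def V_def M_def by auto

lemma etaplus_nuplus_bounds:
  shows "0 \<le> etaplus Nt Nc yc l" "etaplus Nt Nc yc l \<le> eta Nc yc l"
    and "0 \<le> nuplus Nt Nc yc l" "nuplus Nt Nc yc l \<le> nu Nc yc l"
    and "etaplus Nt Nc yc l + nuplus Nt Nc yc l = int (M Nt Nc l)"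
  using eta_bounds[of Nc yc l] unfolding etaplus_eq_max nuplus_def nu_def M_def by auto

lemma feasible_stratum_count_bounds:
  assumes "feasible_matching L Nt Nc a" "l < L"
  shows "int (Bcount_l yt yc a l) - int (Ccount_l yt yc a l) \<le> Uplus Nt Nc yt l - etaplus Nt Nc yc l"
    and "int (Bcount_l yt yc a l) \<le> min (Uplus Nt Nc yt l) (nuplus Nt Nc yc l)"
proof -
  have "stratum a l \<subseteq> {..<Nt l} \<times> {..<Nc l}" "matching (stratum a l)"
    "card (stratum a l) = min (Nt l) (Nc l)"
    using assms stratum_subset[of a L Nt Nc l] by (auto simp: feasible_matching_iff M_def)
  note bounds = matching_cross_count_bounds[OF this, of "yt l" "yc l"]
  show "int (Bcount_l yt yc a l) - int (Ccount_l yt yc a l) \<le> Uplus Nt Nc yt l - etaplus Nt Nc yc l"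
    using bounds(1) by (simp add: Bcount_l_stratum Ccount_l_stratum Uplus_eq_min etaplus_eq_max U_def eta_def M_def)
  show "int (Bcount_l yt yc a l) \<le> min (Uplus Nt Nc yt l) (nuplus Nt Nc yc l)"
    using bounds(2) by (simp add: Bcount_l_stratum nuplus_def Uplus_eq_min etaplus_eq_max U_def eta_def M_def)
qed

lemma obtain_stratum_matching:
  fixes B C :: int
  assumes "0 \<le> B" "B \<le> Uplus Nt Nc yt l" "0 \<le> C" "C \<le> Vplus Nt Nc yt l"
    and "B - C = Uplus Nt Nc yt l - etaplus Nt Nc yc l"
  obtains P where "P \<subseteq> {..<Nt l} \<times> {..<Nc l}" "matching P" "card P = M Nt Nc l"
    "int (card {(i, j) \<in> P. yt l i \<and> \<not> yc l j}) = B"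
    "int (card {(i, j) \<in> P. \<not> yt l i \<and> yc l j}) = C"
proof -
  define X1 where "X1 = {i. i < Nt l \<and> yt l i}"
  define X0 where "X0 = {i. i < Nt l \<and> \<not> yt l i}"
  define Y1 where "Y1 = {j. j < Nc l \<and> yc l j}"
  define Y0 where "Y0 = {j. j < Nc l \<and> \<not> yc l j}"
  have cards: "int (card X1) = U Nt yt l" "int (card X0) = V Nt yt l"
    "int (card Y1) = eta Nc yc l" "int (card Y0) = nu Nc yc l"
    unfolding X1_def X0_def Y1_def Y0_def card_filter_lessThan_compl
    using card_filter_lessThan_le[of "Nt l" "yt l"] card_filter_lessThan_le[of "Nc l" "yc l"]
    by (simp_all add: U_def V_def eta_def nu_def of_nat_diff)
  \<comment> \<open>the remaining pairs are concordant: A of type (1,1) and D of type (0,0)\<close>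
  define A where "A = nat (Uplus Nt Nc yt l - B)"
  define D where "D = nat (Vplus Nt Nc yt l - C)"
  note tc = Uplus_Vplus_bounds[of Nt Nc yt l] etaplus_nuplus_bounds[of Nt Nc yc l]
  obtain P where P: "P \<subseteq> (X1 \<union> X0) \<times> (Y1 \<union> Y0)" "matching P"
    "card P = A + nat B + nat C + D" "card (P \<inter> X1 \<times> Y0) = nat B" "card (P \<inter> X0 \<times> Y1) = nat C"
  proof (rule obtain_matching_with_cross_counts)
    show "finite X1" "finite X0" "finite Y1" "finite Y0" "X1 \<inter> X0 = {}" "Y1 \<inter> Y0 = {}"
      unfolding X1_def X0_def Y1_def Y0_def by auto
    show "A + nat B \<le> card X1" "nat C + D \<le> card X0" "A + nat C \<le> card Y1" "nat B + D \<le> card Y0"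
      using assms tc cards unfolding A_def D_def by linarith+
  qed
  have "P \<subseteq> {..<Nt l} \<times> {..<Nc l}"
    using P(1) unfolding X1_def X0_def Y1_def Y0_def by auto
  moreover have "card P = M Nt Nc l"
    using P(3) assms tc unfolding A_def D_def by linarith
  moreover have "{(i, j) \<in> P. yt l i \<and> \<not> yc l j} = P \<inter> X1 \<times> Y0"
    "{(i, j) \<in> P. \<not> yt l i \<and> yc l j} = P \<inter> X0 \<times> Y1"
    using calculation(1) unfolding X1_def X0_def Y1_def Y0_def by auto
  ultimately show ?thesis
    using that P(2,4,5) assms(1,3) by simp
qed

lemma card_filter_strata:
  fixes a :: "(nat \<times> nat \<times> nat) set"
  assumes "a \<subseteq> {(l, i, j). l < L \<and> i < Nt l \<and> j < Nc l}"
  shows "card {(l, i, j) \<in> a. Q l i j} = (\<Sum>l<L. card {(i, j). (l, i, j) \<in> a \<and> Q l i j})"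
proof -
  have "{(l, i, j) \<in> a. Q l i j} = (SIGMA l:{..<L}. {(i, j). (l, i, j) \<in> a \<and> Q l i j})"
    using assms by auto
  moreover have "finite {(i, j). (l, i, j) \<in> a \<and> Q l i j}" for l
    by (rule finite_subset[of _ "{..<Nt l} \<times> {..<Nc l}"]) (use assms in auto)
  ultimately show ?thesis by simp
qed

lemma chi_eq_chi_ratio_strata:
  assumes "a \<subseteq> {(l, i, j). l < L \<and> i < Nt l \<and> j < Nc l}"
  shows "chi yt yc a =
    chi_ratio (real_of_int (\<Sum>l<L. int (Bcount_l yt yc a l) - int (Ccount_l yt yc a l)))
              (real_of_int (\<Sum>l<L. int (Bcount_l yt yc a l) + int (Ccount_l yt yc a l)))"
proof -
  have "Bcount yt yc a = (\<Sum>l<L. Bcount_l yt yc a l)" "Ccount yt yc a = (\<Sum>l<L. Ccount_l yt yc a l)"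
    unfolding Bcount_def Bcount_l_def Ccount_def Ccount_l_def
    using card_filter_strata[OF assms] by simp_all
  then show ?thesis
    unfolding chi_def chi_ratio_def by (simp add: sum_subtractf sum.distrib)
qed

lemma feasible_matching_of_strata:
  assumes "\<And>l. l < L \<Longrightarrow> P l \<subseteq> {..<Nt l} \<times> {..<Nc l} \<and> matching (P l) \<and> card (P l) = M Nt Nc l"
  defines "a \<equiv> {(l, i, j). l < L \<and> (i, j) \<in> P l}"
  shows "feasible_matching L Nt Nc a" and "\<And>l. l < L \<Longrightarrow> stratum a l = P l"
proof -
  have strata: "stratum a l = (if l < L then P l else {})" for l
    unfolding a_def stratum_def by auto
  then show "\<And>l. l < L \<Longrightarrow> stratum a l = P l" by simp
  have "a \<subseteq> {(l, i, j). l < L \<and> i < Nt l \<and> j < Nc l}"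
    unfolding a_def using assms(1) by blast
  moreover have "matching (stratum a l)" for l
    using assms(1) by (simp add: strata matching_def)
  ultimately show "feasible_matching L Nt Nc a"
    unfolding feasible_matching_iff using assms(1) strata by simp
qed

lemma chi_le_of_feasible:
  fixes B C :: "nat \<Rightarrow> int" and Nt Nc :: "nat \<Rightarrow> nat" and yt yc :: "nat \<Rightarrow> nat \<Rightarrow> bool"
  defines "D \<equiv> \<lambda>l. Uplus Nt Nc yt l - etaplus Nt Nc yc l"
  assumes feasible: "feasible_matching L Nt Nc a"
    and diff: "\<And>l. l < L \<Longrightarrow> B l - C l = D l" and nonneg: "\<And>l. l < L \<Longrightarrow> 0 \<le> B l"
    and pos: "\<And>l. 1 \<le> (\<Sum>l<L. D l) \<Longrightarrow> l < L \<Longrightarrow> B l + C l = \<bar>D l\<bar>"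
    and nonpos: "\<And>l. \<not> 1 \<le> (\<Sum>l<L. D l) \<Longrightarrow> l < L \<Longrightarrow> B l = min (Uplus Nt Nc yt l) (nuplus Nt Nc yc l)"
  shows "chi yt yc a \<le> chi_ratio (real_of_int (\<Sum>l<L. B l - C l)) (real_of_int (\<Sum>l<L. B l + C l))"
  unfolding chi_eq_chi_ratio_strata[OF feasible[unfolded feasible_matching_iff, THEN conjunct1]]
proof (rule chi_ratio_sum_le[where D = D])
  fix l assume "l < L"
  note bounds = feasible_stratum_count_bounds[OF feasible \<open>l < L\<close>, of yt yc]
  show "B l - C l = D l" "0 \<le> B l \<and> 0 \<le> int (Bcount_l yt yc a l) \<and> 0 \<le> int (Ccount_l yt yc a l)"
    "int (Bcount_l yt yc a l) - int (Ccount_l yt yc a l) \<le> D l"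
    using diff nonneg bounds(1) \<open>l < L\<close> unfolding D_def by simp_all
  show "B l + C l = \<bar>D l\<bar>" if "1 \<le> (\<Sum>l<L. D l)"
    using pos that \<open>l < L\<close> by simp
  show "int (Bcount_l yt yc a l) \<le> B l" if "(\<Sum>l<L. D l) < 1"
    using nonpos bounds(2) that \<open>l < L\<close> by simp
qed

lemma obtain_feasible_matching_with_counts:
  fixes B C :: "nat \<Rightarrow> int"
  assumes "\<And>l. l < L \<Longrightarrow> 0 \<le> B l \<and> B l \<le> Uplus Nt Nc yt l \<and> 0 \<le> C l \<and> C l \<le> Vplus Nt Nc yt l
      \<and> B l - C l = Uplus Nt Nc yt l - etaplus Nt Nc yc l"
  obtains a where "feasible_matching L Nt Nc a"
    "\<forall>l<L. int (Bcount_l yt yc a l) = B l \<and> int (Ccount_l yt yc a l) = C l"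
    "chi yt yc a = chi_ratio (real_of_int (\<Sum>l<L. B l - C l)) (real_of_int (\<Sum>l<L. B l + C l))"
proof -
  define good where "good l Pl \<longleftrightarrow> Pl \<subseteq> {..<Nt l} \<times> {..<Nc l} \<and> matching Pl \<and> card Pl = M Nt Nc l
      \<and> int (card {(i, j) \<in> Pl. yt l i \<and> \<not> yc l j}) = B l
      \<and> int (card {(i, j) \<in> Pl. \<not> yt l i \<and> yc l j}) = C l" for l Pl
  have "\<exists>Pl. l < L \<longrightarrow> good l Pl" for l
  proof (cases "l < L")
    case True
    then have "0 \<le> B l" "B l \<le> Uplus Nt Nc yt l" "0 \<le> C l" "C l \<le> Vplus Nt Nc yt l"
      "B l - C l = Uplus Nt Nc yt l - etaplus Nt Nc yc l"
      using assms by auto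
    then obtain Pl where "good l Pl"
      unfolding good_def by (rule obtain_stratum_matching) blast
    then show ?thesis by blast
  qed simp
  then have "\<exists>P. \<forall>l. l < L \<longrightarrow> good l (P l)"
    by (intro choice allI)
  then obtain P where P: "\<And>l. l < L \<Longrightarrow> good l (P l)"
    by blast
  define a where "a = {(l, i, j). l < L \<and> (i, j) \<in> P l}"
  have "P l \<subseteq> {..<Nt l} \<times> {..<Nc l} \<and> matching (P l) \<and> card (P l) = M Nt Nc l" if "l < L" for l
    using P[OF that] unfolding good_def by blast
  note a_strata = feasible_matching_of_strata[of L P Nt Nc, OF this, folded a_def]
  have counts: "\<forall>l<L. int (Bcount_l yt yc a l) = B l \<and> int (Ccount_l yt yc a l) = C l"
    using P a_strata(2) by (simp add: Bcount_l_stratum Ccount_l_stratum good_def)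
  then have sums: "(\<Sum>l<L. int (Bcount_l yt yc a l) - int (Ccount_l yt yc a l)) = (\<Sum>l<L. B l - C l)"
    "(\<Sum>l<L. int (Bcount_l yt yc a l) + int (Ccount_l yt yc a l)) = (\<Sum>l<L. B l + C l)"
    by (auto intro: sum.cong)
  have a_sub: "a \<subseteq> {(l, i, j). l < L \<and> i < Nt l \<and> j < Nc l}"
    using a_strata(1) by (simp add: feasible_matching_iff)
  have "chi yt yc a = chi_ratio (real_of_int (\<Sum>l<L. B l - C l)) (real_of_int (\<Sum>l<L. B l + C l))"
    unfolding chi_eq_chi_ratio_strata[OF a_sub] sums by (rule refl)
  with a_strata(1) counts show ?thesis by (rule that)
qed

text \<open>In the first case B = max (u - e) 0 and C = max (e - u) 0.\<close>

lemma optimal_pair_counts: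
  fixes u v e n :: int and pos :: bool
  assumes "0 \<le> u" "0 \<le> v" "0 \<le> e" "0 \<le> n" "u + v = e + n"
  defines "B \<equiv> if pos then min (u - min u e) (n - min n v) else min u n"
    and "C \<equiv> if pos then min (e - min u e) (v - min n v) else min e v"
  shows "B - C = u - e" "0 \<le> B" "B \<le> u" "0 \<le> C" "C \<le> v"
    and "pos \<Longrightarrow> B + C = \<bar>u - e\<bar>" and "\<not> pos \<Longrightarrow> B = min u n"
  using assms unfolding B_def C_def by (auto simp: min_def)

theorem theorem6:
  fixes L :: nat and Nt Nc :: "nat \<Rightarrow> nat" and yt yc :: "nat \<Rightarrow> nat \<Rightarrow> bool"
    and Bl Cl :: "nat \<Rightarrow> int"
  defines "TE \<equiv> (\<Sum>l<L. Uplus Nt Nc yt l - etaplus Nt Nc yc l)"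
  assumes Bl_def: "\<And>l. Bl l = (if TE \<ge> 1 then
              min (Uplus Nt Nc yt l - min (Uplus Nt Nc yt l) (etaplus Nt Nc yc l))
                  (nuplus Nt Nc yc l - min (nuplus Nt Nc yc l) (Vplus Nt Nc yt l))
            else min (Uplus Nt Nc yt l) (nuplus Nt Nc yc l))"
  and Cl_def: "\<And>l. Cl l = (if TE \<ge> 1 then
              min (etaplus Nt Nc yc l - min (Uplus Nt Nc yt l) (etaplus Nt Nc yc l))
                  (Vplus Nt Nc yt l - min (nuplus Nt Nc yc l) (Vplus Nt Nc yt l))
            else min (etaplus Nt Nc yc l) (Vplus Nt Nc yt l))"
  shows "(\<forall>a. feasible_matching L Nt Nc a \<longrightarrow>
            chi yt yc a \<le> (real_of_int (\<Sum>l<L. Bl l - Cl l) - 1)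
                           / sqrt (real_of_int (\<Sum>l<L. Bl l + Cl l) + 1))
       \<and> (\<exists>a. feasible_matching L Nt Nc a
            \<and> (\<forall>l<L. int (Bcount_l yt yc a l) = Bl l \<and> int (Ccount_l yt yc a l) = Cl l)
            \<and> chi yt yc a = (real_of_int (\<Sum>l<L. Bl l - Cl l) - 1)
                           / sqrt (real_of_int (\<Sum>l<L. Bl l + Cl l) + 1))"
proof -
  have "Uplus Nt Nc yt l + Vplus Nt Nc yt l = etaplus Nt Nc yc l + nuplus Nt Nc yc l" for l
    using Uplus_Vplus_bounds(5) etaplus_nuplus_bounds(5) by simp
  note pair = optimal_pair_counts[OF Uplus_Vplus_bounds(1,3) etaplus_nuplus_bounds(1,3) this,
      where pos = "1 \<le> TE", folded Bl_def Cl_def]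
  have "chi yt yc a \<le> chi_ratio (real_of_int (\<Sum>l<L. Bl l - Cl l)) (real_of_int (\<Sum>l<L. Bl l + Cl l))"
    if "feasible_matching L Nt Nc a" for a
    using that pair(1,2,6,7) unfolding TE_def by (rule chi_le_of_feasible)
  moreover obtain a where "feasible_matching L Nt Nc a"
    "\<forall>l<L. int (Bcount_l yt yc a l) = Bl l \<and> int (Ccount_l yt yc a l) = Cl l"
    "chi yt yc a = chi_ratio (real_of_int (\<Sum>l<L. Bl l - Cl l)) (real_of_int (\<Sum>l<L. Bl l + Cl l))"
    by (rule obtain_feasible_matching_with_counts[where L = L and Nt = Nt and Nc = Nc
          and yt = yt and yc = yc and B = Bl and C = Cl]) (simp_all add: pair(1-5))
  ultimately show ?thesis
    unfolding chi_ratio_def[symmetric] by blast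
qed

end
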